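(* Under the hypotheses of the context with $\nu_0=0$, $\nu_1=\nu$, $x_0(s)\neq0$ and $s^{-\nu}y_1(s)/x_0(s)\to1$ as $s\to0^+$, define functions $q,p,u,v$ of $t>0$ by $t=4s$ and $$x_0(s)=i s^{-\nu/2}q(t),\quad y_0(s)=i s^{\nu/2}\big(p(t)-\tfrac{\nu}{2}q(t)\big),\quad \eta_0(s)=-\tfrac14u(t),\quad \xi_0(s)=\tfrac14\big(-v(t)+\tfrac{\nu}{2}u(t)\big).$$ Then, with $\dot{}=d/dt$, $$tq^2=\tfrac14u^2+u+2v,\qquad u=4p^2-(\nu^2-t+2v)q^2+2qpu,\qquad \dot u=q^2,\qquad \dot v=qp,$$ $$t\dot q=p+\tfrac14qu,\qquad t\dot p=\big(\tfrac14\nu^2-\tfrac14t+\tfrac12v\big)q-\tfrac14pu .$$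
   Context: Fix complex parameters $\nu_0,\nu_1$ and put $e_1=\nu_0+\nu_1$, $e_2=\nu_0\nu_1$. Let $x_0,x_1,y_0,y_1,\xi_0,\xi_1,\eta_0,\eta_1$ be smooth complex-valued functions of $s\in(0,\infty)$ satisfying, with $'=d/ds$, the system $s x_0'=-\eta_0x_0-x_1$, $s x_1'=-\eta_1x_0+sx_0+\xi_0x_0+\xi_1x_1$, $s y_1'=-\xi_1y_1+y_0$, $s y_0'=-\xi_0y_1-sy_1+\eta_0y_0+\eta_1y_1$, $\xi_0'=x_0y_0$, $\xi_1'=x_0y_1$, $\eta_0'=x_0y_1$, $\eta_1'=x_1y_1$, together with the boundary behaviour as $s\to0^+$: $\xi_0\to e_2$, $\xi_1\to-e_1$, $\eta_0\to0$, $\eta_1\to0$, and $x_j(s)y_k(s)\to0$ for all $j,k\in\{0,1\}$. *)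

theory Defs
  imports "HOL-Analysis.Analysis"
begin

end

theory Submission
  imports Defs
begin

text \<open>
  The combinations \<open>x\<^sub>0y\<^sub>0 + x\<^sub>1y\<^sub>1\<close>, \<open>\<xi>\<^sub>1 - \<eta>\<^sub>0\<close>, \<open>\<xi>\<^sub>0 + \<eta>\<^sub>1\<close>, \<open>s\<^bsup>-e\<^sub>1\<^esup>y\<^sub>1/x\<^sub>0\<close> and two quadratic
  expressions in the unknowns have vanishing derivative along the system, so each equals its limit
  at \<open>s \<rightarrow> 0\<^sup>+\<close>, which the boundary conditions determine. In the variables \<open>q, p, u, v\<close> the two
  quadratic integrals become the two algebraic identities, and the differential equations follow
  from the chain rule for \<open>s = t/4\<close>, the other integrals serving to eliminate \<open>x\<^sub>1, y\<^sub>1, \<xi>\<^sub>1, \<eta>\<^sub>1\<close>.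
\<close>

lemma eq_limit_at_right_if_vector_derivative_zero:
  fixes f :: "real \<Rightarrow> 'a::real_normed_vector"
  assumes deriv: "\<And>s. s > 0 \<Longrightarrow> (f has_vector_derivative 0) (at s)"
    and lim: "(f \<longlongrightarrow> L) (at_right 0)"
    and "s > 0"
  shows "f s = L"
proof -
  obtain c where c: "\<And>s. s \<in> {0<..} \<Longrightarrow> f s = c"
    using has_vector_derivative_zero_constant[of "{0<..}" f] deriv
    by (auto intro: has_vector_derivative_at_within)
  have "\<forall>\<^sub>F s in at_right 0. f s = c"
    using eventually_at_right_less[of "0::real"] by (rule eventually_mono) (simp add: c)
  then have "(f \<longlongrightarrow> c) (at_right 0)"
    by (rule tendsto_eventually)
  with lim have "c = L"
    using tendsto_unique trivial_limit_at_right_real by blast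
  with c \<open>s > 0\<close> show ?thesis by simp
qed

lemma has_vector_derivative_powr_of_real:
  assumes "s > 0"
  shows "((\<lambda>s. (of_real s :: complex) powr w) has_vector_derivative w * of_real s powr w / of_real s) (at s)"
proof -
  have "(of_real s :: complex) \<notin> \<real>\<^sub>\<le>\<^sub>0"
    using assms by (auto simp: nonpos_Reals_def)
  from has_vector_derivative_real_field[OF has_field_derivative_powr[OF this]]
  show ?thesis
    using assms by (simp add: powr_diff)
qed

lemma has_vector_derivative_inverse:
  fixes f :: "real \<Rightarrow> 'a::real_normed_field"
  assumes "(f has_vector_derivative f') (at x)" "f x \<noteq> 0"
  shows "((\<lambda>x. inverse (f x)) has_vector_derivative - f' / (f x)\<^sup>2) (at x)"
  using field_vector_diff_chain_at[OF assms(1) DERIV_inverse[OF assms(2)]]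
  by (simp add: o_def power2_eq_square divide_inverse)

lemma has_vector_derivative_rescale:
  fixes f g :: "real \<Rightarrow> 'a::real_normed_vector"
  assumes "(f has_vector_derivative D) (at (t / c))" "c > 0" "t > 0"
    and "\<And>\<tau>. \<tau> > 0 \<Longrightarrow> g \<tau> = f (\<tau> / c)"
  shows "(g has_vector_derivative D /\<^sub>R c) (at t)"
proof -
  have "((\<lambda>\<tau>. \<tau> / c) has_vector_derivative 1 / c) (at t)"
    using has_vector_derivative_def by (auto intro!: derivative_eq_intros)
  from vector_diff_chain_at[OF this assms(1)]
  have "((\<lambda>\<tau>. f (\<tau> / c)) has_vector_derivative D /\<^sub>R c) (at t)"
    by (simp add: o_def inverse_eq_divide)
  then show ?thesis
    by (rule has_vector_derivative_transform_within_open[where S="{0<..}"]) (use assms in auto)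
qed

locale isomonodromic_system =
  fixes \<nu>0 \<nu>1 :: complex
    and x0 x1 y0 y1 \<xi>0 \<xi>1 \<eta>0 \<eta>1 :: "real \<Rightarrow> complex"
  assumes hx0: "\<And>s. s > 0 \<Longrightarrow> ((x0 has_vector_derivative
                  ((- \<eta>0 s * x0 s - x1 s) / of_real s)) (at s))"
    and hx1: "\<And>s. s > 0 \<Longrightarrow> ((x1 has_vector_derivative
                  ((- \<eta>1 s * x0 s + of_real s * x0 s + \<xi>0 s * x0 s + \<xi>1 s * x1 s) / of_real s)) (at s))"
    and hy1: "\<And>s. s > 0 \<Longrightarrow> ((y1 has_vector_derivative
                  ((- \<xi>1 s * y1 s + y0 s) / of_real s)) (at s))"
    and hy0: "\<And>s. s > 0 \<Longrightarrow> ((y0 has_vector_derivative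
                  ((- \<xi>0 s * y1 s - of_real s * y1 s + \<eta>0 s * y0 s + \<eta>1 s * y1 s) / of_real s)) (at s))"
    and h\<xi>0: "\<And>s. s > 0 \<Longrightarrow> ((\<xi>0 has_vector_derivative (x0 s * y0 s)) (at s))"
    and h\<xi>1: "\<And>s. s > 0 \<Longrightarrow> ((\<xi>1 has_vector_derivative (x0 s * y1 s)) (at s))"
    and h\<eta>0: "\<And>s. s > 0 \<Longrightarrow> ((\<eta>0 has_vector_derivative (x0 s * y1 s)) (at s))"
    and h\<eta>1: "\<And>s. s > 0 \<Longrightarrow> ((\<eta>1 has_vector_derivative (x1 s * y1 s)) (at s))"
    and b\<xi>0: "(\<xi>0 \<longlongrightarrow> \<nu>0 * \<nu>1) (at_right 0)"
    and b\<xi>1: "(\<xi>1 \<longlongrightarrow> - (\<nu>0 + \<nu>1)) (at_right 0)"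
    and b\<eta>0: "(\<eta>0 \<longlongrightarrow> 0) (at_right 0)"
    and b\<eta>1: "(\<eta>1 \<longlongrightarrow> 0) (at_right 0)"
    and b00: "((\<lambda>s. x0 s * y0 s) \<longlongrightarrow> 0) (at_right 0)"
    and b01: "((\<lambda>s. x0 s * y1 s) \<longlongrightarrow> 0) (at_right 0)"
    and b10: "((\<lambda>s. x1 s * y0 s) \<longlongrightarrow> 0) (at_right 0)"
    and b11: "((\<lambda>s. x1 s * y1 s) \<longlongrightarrow> 0) (at_right 0)"
begin

lemma bilinear_integral: "s > 0 \<Longrightarrow> x0 s * y0 s + x1 s * y1 s = 0"
  (is "_ \<Longrightarrow> ?F s = 0")
proof (rule eq_limit_at_right_if_vector_derivative_zero)
  show "(?F \<longlongrightarrow> 0) (at_right 0)"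
    using tendsto_add[OF b00 b11] by simp
  fix s :: real assume s: "s > 0"
  show "(?F has_vector_derivative 0) (at s)"
    by (rule has_vector_derivative_eq_rhs,
        (rule has_vector_derivative_add has_vector_derivative_mult hx0 hx1 hy0 hy1 s)+)
       (use s in \<open>simp add: field_simps\<close>)
qed

lemma xi1_eq: "s > 0 \<Longrightarrow> \<xi>1 s = \<eta>0 s - (\<nu>0 + \<nu>1)"
proof -
  assume "s > 0"
  have "\<xi>1 s - \<eta>0 s = - (\<nu>0 + \<nu>1)"
  proof (rule eq_limit_at_right_if_vector_derivative_zero[OF _ _ \<open>s > 0\<close>])
    show "((\<lambda>s. \<xi>1 s - \<eta>0 s) \<longlongrightarrow> - (\<nu>0 + \<nu>1)) (at_right 0)"
      using tendsto_diff[OF b\<xi>1 b\<eta>0] by simp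
  qed (use has_vector_derivative_diff[OF h\<xi>1 h\<eta>0] in simp)
  then show ?thesis by (simp add: algebra_simps)
qed

lemma eta1_eq: "s > 0 \<Longrightarrow> \<eta>1 s = \<nu>0 * \<nu>1 - \<xi>0 s"
proof -
  assume "s > 0"
  have "\<xi>0 s + \<eta>1 s = \<nu>0 * \<nu>1"
  proof (rule eq_limit_at_right_if_vector_derivative_zero[OF _ _ \<open>s > 0\<close>])
    show "((\<lambda>s. \<xi>0 s + \<eta>1 s) \<longlongrightarrow> \<nu>0 * \<nu>1) (at_right 0)"
      using tendsto_add[OF b\<xi>0 b\<eta>1] by simp
  qed (use has_vector_derivative_add[OF h\<xi>0 h\<eta>1] bilinear_integral in simp)
  then show ?thesis by (simp add: algebra_simps)
qed

lemma y1_eq_powr_x0: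
  assumes x0_nonzero: "\<And>s. s > 0 \<Longrightarrow> x0 s \<noteq> 0"
    and lim: "((\<lambda>s. of_real s powr - (\<nu>0 + \<nu>1) * y1 s / x0 s) \<longlongrightarrow> 1) (at_right 0)"
    and "s > 0"
  shows "y1 s = of_real s powr (\<nu>0 + \<nu>1) * x0 s"
proof -
  have "of_real s powr - (\<nu>0 + \<nu>1) * y1 s * inverse (x0 s) = 1" (is "?F s = 1")
  proof (rule eq_limit_at_right_if_vector_derivative_zero[OF _ _ \<open>s > 0\<close>])
    show "(?F \<longlongrightarrow> 1) (at_right 0)"
      using lim by (simp add: divide_inverse)
    fix s :: real assume s: "s > 0"
    show "(?F has_vector_derivative 0) (at s)"
      by (rule has_vector_derivative_eq_rhs,
          (rule has_vector_derivative_mult has_vector_derivative_powr_of_real has_vector_derivative_inverse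
             hx0 hy1 x0_nonzero s)+)
         (use s x0_nonzero[OF s] bilinear_integral[OF s] xi1_eq[OF s]
           in \<open>simp add: field_simps power2_eq_square; algebra\<close>)
  qed
  then show ?thesis
    using \<open>s > 0\<close> x0_nonzero[OF \<open>s > 0\<close>] unfolding powr_minus by (simp add: field_simps)
qed

lemma xi0_integral:
  "s > 0 \<Longrightarrow>
    of_real s * (x0 s * y1 s) + (\<eta>0 s)\<^sup>2 - (1 + \<nu>0 + \<nu>1) * \<eta>0 s - 2 * \<xi>0 s = - 2 * \<nu>0 * \<nu>1"
  (is "_ \<Longrightarrow> ?F s = _")
proof (rule eq_limit_at_right_if_vector_derivative_zero)
  show "(?F \<longlongrightarrow> - 2 * \<nu>0 * \<nu>1) (at_right 0)"
    by (rule tendsto_eq_intros b01 b\<eta>0 b\<xi>0 | simp)+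
  fix s :: real assume s: "s > 0"
  show "(?F has_vector_derivative 0) (at s)"
    unfolding power2_eq_square
    by (rule has_vector_derivative_eq_rhs,
        (rule has_vector_derivative_add has_vector_derivative_diff has_vector_derivative_mult
           has_vector_derivative_const has_vector_derivative_of_real DERIV_ident hx0 hy1 h\<eta>0 h\<xi>0 s)+)
       (use s bilinear_integral[OF s] xi1_eq[OF s] in \<open>simp add: field_simps; algebra\<close>)
qed

lemma x1y0_integral:
  "s > 0 \<Longrightarrow>
    x1 s * y0 s - (\<nu>0 + \<nu>1) * (x0 s * y0 s) - of_real s * (x0 s * y1 s) - 2 * \<xi>0 s * (x0 s * y1 s)
      + 2 * \<eta>0 s * (x0 s * y0 s) + \<eta>0 s + \<nu>0 * \<nu>1 * (x0 s * y1 s) = 0"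
  (is "_ \<Longrightarrow> ?F s = 0")
proof (rule eq_limit_at_right_if_vector_derivative_zero)
  show "(?F \<longlongrightarrow> 0) (at_right 0)"
    by (rule tendsto_eq_intros b00 b01 b10 b\<eta>0 b\<xi>0 | simp)+
  fix s :: real assume s: "s > 0"
  show "(?F has_vector_derivative 0) (at s)"
    by (rule has_vector_derivative_eq_rhs,
        (rule has_vector_derivative_add has_vector_derivative_diff has_vector_derivative_mult
           has_vector_derivative_const has_vector_derivative_of_real DERIV_ident
           hx0 hx1 hy0 hy1 h\<eta>0 h\<xi>0 s)+)
       (use s bilinear_integral[OF s] xi1_eq[OF s] eta1_eq[OF s] in \<open>simp add: field_simps; algebra\<close>)
qed

end

locale rescaled_isomonodromic_system = isomonodromic_system +
  fixes q p u v :: "real \<Rightarrow> complex"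
  assumes nu0: "\<nu>0 = 0"
    and x0_nonzero: "\<And>s. s > 0 \<Longrightarrow> x0 s \<noteq> 0"
    and lim1: "((\<lambda>s. (of_real s) powr (- \<nu>1) * y1 s / x0 s) \<longlongrightarrow> 1) (at_right 0)"
    and dq: "\<And>t. t > 0 \<Longrightarrow> x0 (t / 4) = \<i> * (of_real (t / 4)) powr (- \<nu>1 / 2) * q t"
    and dp: "\<And>t. t > 0 \<Longrightarrow> y0 (t / 4) = \<i> * (of_real (t / 4)) powr (\<nu>1 / 2) * (p t - \<nu>1 / 2 * q t)"
    and du: "\<And>t. t > 0 \<Longrightarrow> \<eta>0 (t / 4) = - (1 / 4) * u t"
    and dv: "\<And>t. t > 0 \<Longrightarrow> \<xi>0 (t / 4) = (1 / 4) * (- v t + \<nu>1 / 2 * u t)"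
begin

definition gauge_factor :: "real \<Rightarrow> complex" where
  "gauge_factor t = of_real (t / 4) powr (\<nu>1 / 2)"

lemma gauge_factor_nonzero: "t > 0 \<Longrightarrow> gauge_factor t \<noteq> 0"
  by (simp add: gauge_factor_def)

lemma x0_eq: "t > 0 \<Longrightarrow> x0 (t / 4) = \<i> * q t / gauge_factor t"
  using dq[of t] by (simp add: gauge_factor_def powr_minus_divide)

lemma y0_eq: "t > 0 \<Longrightarrow> y0 (t / 4) = \<i> * gauge_factor t * (p t - \<nu>1 / 2 * q t)"
  using dp[of t] by (simp add: gauge_factor_def)

lemma y1_eq: "t > 0 \<Longrightarrow> y1 (t / 4) = \<i> * gauge_factor t * q t"
proof -
  assume t: "t > 0"
  then have "t / 4 > 0" by simp
  have "y1 (t / 4) = of_real (t / 4) powr (\<nu>1 / 2 + \<nu>1 / 2) * x0 (t / 4)"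
    using y1_eq_powr_x0[OF x0_nonzero _ \<open>t / 4 > 0\<close>] lim1 by (simp add: nu0)
  then show ?thesis
    using x0_eq[OF t] gauge_factor_nonzero[OF t] unfolding powr_add gauge_factor_def[symmetric]
    by (simp add: field_simps)
qed

lemma x1_eq: "t > 0 \<Longrightarrow> x1 (t / 4) = - \<i> * (p t - \<nu>1 / 2 * q t) / gauge_factor t"
proof -
  assume t: "t > 0"
  then have "t / 4 > 0" by simp
  have "q t \<noteq> 0"
    using x0_nonzero[OF \<open>t / 4 > 0\<close>] x0_eq[OF t] by auto
  moreover have "\<i> * q t * (y0 (t / 4) + x1 (t / 4) * (gauge_factor t)\<^sup>2) = 0"
    using bilinear_integral[OF \<open>t / 4 > 0\<close>] y1_eq[OF t] x0_eq[OF t] gauge_factor_nonzero[OF t]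
    by (simp add: field_simps power2_eq_square)
  ultimately have "y0 (t / 4) + x1 (t / 4) * (gauge_factor t)\<^sup>2 = 0"
    by simp
  then have "x1 (t / 4) = - y0 (t / 4) / (gauge_factor t)\<^sup>2"
    using gauge_factor_nonzero[OF t] by (simp add: field_simps eq_neg_iff_add_eq_0)
  moreover have "y0 (t / 4) / gauge_factor t = \<i> * (p t - \<nu>1 / 2 * q t)"
    using y0_eq[OF t] gauge_factor_nonzero[OF t] by simp
  ultimately show ?thesis
    by (simp add: power2_eq_square divide_divide_eq_left[symmetric])
qed

lemma u_eq: "t > 0 \<Longrightarrow> u t = - 4 * \<eta>0 (t / 4)"
  using du[of t] by simp

lemma v_eq: "t > 0 \<Longrightarrow> v t = - 4 * \<xi>0 (t / 4) - 2 * \<nu>1 * \<eta>0 (t / 4)"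
  using dv[of t] du[of t] by (simp add: field_simps, algebra)

lemma q_eq: "t > 0 \<Longrightarrow> q t = - \<i> * of_real (t / 4) powr (\<nu>1 / 2) * x0 (t / 4)"
  using x0_eq[of t] gauge_factor_nonzero[of t] by (simp add: gauge_factor_def field_simps)

lemma p_eq:
  "t > 0 \<Longrightarrow> p t = - \<i> * y0 (t / 4) * inverse (of_real (t / 4) powr (\<nu>1 / 2)) + \<nu>1 / 2 * q t"
  using y0_eq[of t] gauge_factor_nonzero[of t]
  by (simp add: gauge_factor_def field_simps, use i_squared in algebra)

lemma t_q_square_identity: "t > 0 \<Longrightarrow> of_real t * (q t)\<^sup>2 = (1 / 4) * (u t)\<^sup>2 + u t + 2 * v t"
  using xi0_integral[of "t / 4"] x0_eq[of t] y1_eq[of t] du[of t] dv[of t] gauge_factor_nonzero[of t]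
  by (simp add: nu0 field_simps power2_eq_square, use i_squared in algebra)

lemma u_quadratic_identity:
  "t > 0 \<Longrightarrow> u t = 4 * (p t)\<^sup>2 - (\<nu>1\<^sup>2 - of_real t + 2 * v t) * (q t)\<^sup>2 + 2 * q t * p t * u t"
  using x1y0_integral[of "t / 4"] x0_eq[of t] x1_eq[of t] y0_eq[of t] y1_eq[of t] du[of t] dv[of t]
    gauge_factor_nonzero[of t]
  by (simp add: nu0 field_simps power2_eq_square, use i_squared in algebra)

lemma u_derivative: "t > 0 \<Longrightarrow> (u has_vector_derivative (q t)\<^sup>2) (at t)"
proof -
  assume t: "t > 0"
  have "((\<lambda>s. - 4 * \<eta>0 s) has_vector_derivative - 4 * (x0 (t / 4) * y1 (t / 4))) (at (t / 4))"
    (is "(_ has_vector_derivative ?D) _")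
    using t by (intro has_vector_derivative_mult_right h\<eta>0) simp
  then have "(u has_vector_derivative ?D /\<^sub>R 4) (at t)"
    by (rule has_vector_derivative_rescale) (use t u_eq in auto)
  moreover have "?D /\<^sub>R 4 = (q t)\<^sup>2"
    using x0_eq[OF t] y1_eq[OF t] gauge_factor_nonzero[OF t]
    by (simp add: scaleR_conv_of_real field_simps power2_eq_square)
  ultimately show ?thesis by simp
qed

lemma v_derivative: "t > 0 \<Longrightarrow> (v has_vector_derivative q t * p t) (at t)"
proof -
  assume t: "t > 0"
  have "((\<lambda>s. - 4 * \<xi>0 s - 2 * \<nu>1 * \<eta>0 s) has_vector_derivative
      - 4 * (x0 (t / 4) * y0 (t / 4)) - 2 * \<nu>1 * (x0 (t / 4) * y1 (t / 4))) (at (t / 4))"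
    (is "(_ has_vector_derivative ?D) _")
    using t by (intro has_vector_derivative_diff has_vector_derivative_mult_right h\<xi>0 h\<eta>0) simp_all
  then have "(v has_vector_derivative ?D /\<^sub>R 4) (at t)"
    by (rule has_vector_derivative_rescale) (use t v_eq in auto)
  moreover have "?D /\<^sub>R 4 = q t * p t"
    using x0_eq[OF t] y0_eq[OF t] y1_eq[OF t] gauge_factor_nonzero[OF t]
    by (simp add: scaleR_conv_of_real field_simps, use i_squared in algebra)
  ultimately show ?thesis by simp
qed

lemma q_derivative: "t > 0 \<Longrightarrow> (q has_vector_derivative (p t + (1 / 4) * q t * u t) / of_real t) (at t)"
proof -
  assume t: "t > 0"
  then have "t / 4 > 0" by simp
  have "((\<lambda>s. - \<i> * of_real s powr (\<nu>1 / 2) * x0 s) has_vector_derivative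
      - \<i> * (\<nu>1 / 2 * gauge_factor t / of_real (t / 4) * x0 (t / 4)
        + gauge_factor t * ((- \<eta>0 (t / 4) * x0 (t / 4) - x1 (t / 4)) / of_real (t / 4))))
      (at (t / 4))"
    (is "(_ has_vector_derivative ?D) _")
    unfolding gauge_factor_def
    by (rule has_vector_derivative_eq_rhs,
        (rule has_vector_derivative_mult has_vector_derivative_const has_vector_derivative_powr_of_real
           hx0 \<open>t / 4 > 0\<close>)+)
       (simp add: algebra_simps)
  then have "(q has_vector_derivative ?D /\<^sub>R 4) (at t)"
    by (rule has_vector_derivative_rescale) (use t q_eq in auto)
  moreover have "?D /\<^sub>R 4 = (p t + (1 / 4) * q t * u t) / of_real t"
    using x0_eq[OF t] x1_eq[OF t] du[OF t] gauge_factor_nonzero[OF t] t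
    by (simp add: scaleR_conv_of_real field_simps, use i_squared in algebra)
  ultimately show ?thesis by simp
qed

lemma p_derivative:
  "t > 0 \<Longrightarrow> (p has_vector_derivative
     (((1 / 4) * \<nu>1\<^sup>2 - (1 / 4) * of_real t + (1 / 2) * v t) * q t - (1 / 4) * p t * u t) / of_real t) (at t)"
proof -
  assume t: "t > 0"
  then have "t / 4 > 0" by simp
  have "((\<lambda>s. - \<i> * y0 s * inverse (of_real s powr (\<nu>1 / 2))) has_vector_derivative
      - \<i> * ((- \<xi>0 (t / 4) * y1 (t / 4) - of_real (t / 4) * y1 (t / 4) + \<eta>0 (t / 4) * y0 (t / 4)
                 + \<eta>1 (t / 4) * y1 (t / 4)) / of_real (t / 4) * inverse (gauge_factor t)
            - y0 (t / 4) * (\<nu>1 / 2 * gauge_factor t / of_real (t / 4)) / (gauge_factor t)\<^sup>2))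
      (at (t / 4))"
    (is "(_ has_vector_derivative ?D) _")
    unfolding gauge_factor_def
    by (rule has_vector_derivative_eq_rhs,
        (rule has_vector_derivative_mult has_vector_derivative_const has_vector_derivative_inverse
           has_vector_derivative_powr_of_real hy0 \<open>t / 4 > 0\<close>)+)
       (use \<open>t / 4 > 0\<close> in \<open>simp_all add: algebra_simps\<close>)
  txt \<open>Only \<open>p - \<nu>q/2\<close> is a rescaled function of \<open>s\<close>; the derivative of \<open>q\<close> supplies the rest.\<close>
  then have "((\<lambda>\<tau>. p \<tau> - \<nu>1 / 2 * q \<tau>) has_vector_derivative ?D /\<^sub>R 4) (at t)"
    by (rule has_vector_derivative_rescale) (use t p_eq in auto)
  then have "((\<lambda>\<tau>. (p \<tau> - \<nu>1 / 2 * q \<tau>) + \<nu>1 / 2 * q \<tau>) has_vector_derivative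
      ?D /\<^sub>R 4 + \<nu>1 / 2 * ((p t + (1 / 4) * q t * u t) / of_real t)) (at t)"
    by (intro has_vector_derivative_add has_vector_derivative_mult_right q_derivative t)
  moreover have "?D /\<^sub>R 4 + \<nu>1 / 2 * ((p t + (1 / 4) * q t * u t) / of_real t)
      = (((1 / 4) * \<nu>1\<^sup>2 - (1 / 4) * of_real t + (1 / 2) * v t) * q t - (1 / 4) * p t * u t) / of_real t"
    using y0_eq[OF t] y1_eq[OF t] du[OF t] dv[OF t] eta1_eq[OF \<open>t / 4 > 0\<close>] gauge_factor_nonzero[OF t] t
    by (simp add: nu0 scaleR_conv_of_real field_simps power2_eq_square, use i_squared in algebra)
  ultimately show ?thesis by simp
qed

end

theorem mainTheorem5:
  fixes \<nu>0 \<nu>1 :: complex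
    and x0 x1 y0 y1 \<xi>0 \<xi>1 \<eta>0 \<eta>1 :: "real \<Rightarrow> complex"
    and q p u v :: "real \<Rightarrow> complex"
  defines "e1 \<equiv> \<nu>0 + \<nu>1" and "e2 \<equiv> \<nu>0 * \<nu>1"
  assumes hx0: "\<And>s. s > 0 \<Longrightarrow> ((x0 has_vector_derivative
                  ((- \<eta>0 s * x0 s - x1 s) / of_real s)) (at s))"
    and hx1: "\<And>s. s > 0 \<Longrightarrow> ((x1 has_vector_derivative
                  ((- \<eta>1 s * x0 s + of_real s * x0 s + \<xi>0 s * x0 s + \<xi>1 s * x1 s) / of_real s)) (at s))"
    and hy1: "\<And>s. s > 0 \<Longrightarrow> ((y1 has_vector_derivative
                  ((- \<xi>1 s * y1 s + y0 s) / of_real s)) (at s))"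
    and hy0: "\<And>s. s > 0 \<Longrightarrow> ((y0 has_vector_derivative
                  ((- \<xi>0 s * y1 s - of_real s * y1 s + \<eta>0 s * y0 s + \<eta>1 s * y1 s) / of_real s)) (at s))"
    and h\<xi>0: "\<And>s. s > 0 \<Longrightarrow> ((\<xi>0 has_vector_derivative (x0 s * y0 s)) (at s))"
    and h\<xi>1: "\<And>s. s > 0 \<Longrightarrow> ((\<xi>1 has_vector_derivative (x0 s * y1 s)) (at s))"
    and h\<eta>0: "\<And>s. s > 0 \<Longrightarrow> ((\<eta>0 has_vector_derivative (x0 s * y1 s)) (at s))"
    and h\<eta>1: "\<And>s. s > 0 \<Longrightarrow> ((\<eta>1 has_vector_derivative (x1 s * y1 s)) (at s))"
    and b\<xi>0: "(\<xi>0 \<longlongrightarrow> e2) (at_right 0)"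
    and b\<xi>1: "(\<xi>1 \<longlongrightarrow> - e1) (at_right 0)"
    and b\<eta>0: "(\<eta>0 \<longlongrightarrow> 0) (at_right 0)"
    and b\<eta>1: "(\<eta>1 \<longlongrightarrow> 0) (at_right 0)"
    and b00: "((\<lambda>s. x0 s * y0 s) \<longlongrightarrow> 0) (at_right 0)"
    and b01: "((\<lambda>s. x0 s * y1 s) \<longlongrightarrow> 0) (at_right 0)"
    and b10: "((\<lambda>s. x1 s * y0 s) \<longlongrightarrow> 0) (at_right 0)"
    and b11: "((\<lambda>s. x1 s * y1 s) \<longlongrightarrow> 0) (at_right 0)"
    and n0: "\<nu>0 = 0"
    and x0_nz: "\<And>s. s > 0 \<Longrightarrow> x0 s \<noteq> 0"
    and lim1: "((\<lambda>s. (of_real s) powr (- \<nu>1) * y1 s / x0 s) \<longlongrightarrow> 1) (at_right 0)"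
    and dq: "\<And>t. t > 0 \<Longrightarrow> x0 (t / 4) = \<i> * (of_real (t / 4)) powr (- \<nu>1 / 2) * q t"
    and dp: "\<And>t. t > 0 \<Longrightarrow> y0 (t / 4) = \<i> * (of_real (t / 4)) powr (\<nu>1 / 2) * (p t - \<nu>1 / 2 * q t)"
    and du: "\<And>t. t > 0 \<Longrightarrow> \<eta>0 (t / 4) = - (1 / 4) * u t"
    and dv: "\<And>t. t > 0 \<Longrightarrow> \<xi>0 (t / 4) = (1 / 4) * (- v t + \<nu>1 / 2 * u t)"
  shows "\<forall>t > 0.
           of_real t * (q t)\<^sup>2 = (1 / 4) * (u t)\<^sup>2 + u t + 2 * v t
         \<and> u t = 4 * (p t)\<^sup>2 - (\<nu>1\<^sup>2 - of_real t + 2 * v t) * (q t)\<^sup>2 + 2 * q t * p t * u t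
         \<and> (u has_vector_derivative (q t)\<^sup>2) (at t)
         \<and> (v has_vector_derivative (q t * p t)) (at t)
         \<and> (q has_vector_derivative ((p t + (1 / 4) * q t * u t) / of_real t)) (at t)
         \<and> (p has_vector_derivative
              (((1 / 4) * \<nu>1\<^sup>2 - (1 / 4) * of_real t + (1 / 2) * v t) * q t - (1 / 4) * p t * u t) / of_real t) (at t)"
proof -
  interpret rescaled_isomonodromic_system \<nu>0 \<nu>1 x0 x1 y0 y1 \<xi>0 \<xi>1 \<eta>0 \<eta>1 q p u v
    by unfold_locales (use assms in \<open>simp_all add: e1_def e2_def\<close>)
  show ?thesis
    using t_q_square_identity u_quadratic_identity u_derivative v_derivative q_derivative p_derivative
    by blast
qed

end
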